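(* A set of permutations $\{\pi_1,\dots,\pi_n\}\subseteq S_n$ such that $\mathrm{Des}(\pi_i)=\{i-1,i\}\cap[n-1]$ for all $i\in[n]$, or such that $\mathrm{Des}(\pi_i)=[n-1]\setminus\{i-1,i\}$ for all $i\in[n]$, is symmetric.
   Context: $\mathrm{Des}(w)=\{i\in[n-1]: w(i)>w(i+1)\}$. $F_{n,D}=\sum x_{i_1}\cdots x_{i_n}$ over $i_1\le\cdots\le i_n$ with $i_j<i_{j+1}$ whenever $j\in D$. A set $S\subseteq S_n$ is symmetric if $\sum_{w\in S}F_{n,\mathrm{Des}(w)}$ is a symmetric function. *)

theory Defs
  imports "HOL-Combinatorics.Permutations"
begin

definition Des :: "nat \<Rightarrow> (nat \<Rightarrow> nat) \<Rightarrow> nat set" where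
  "Des n w = {i \<in> {1..n-1}. w (Suc i) < w i}"

text \<open>Coefficient of the monomial prod_k x_k^(alpha k) in the fundamental quasisymmetric
  function F_{n,D} = sum of x_{i_1}...x_{i_n} over i_1 <= ... <= i_n with i_j < i_{j+1} for j in D.
  An index sequence (i_1,...,i_n) is the list s (0-based: s!(j-1) = i_j); variables are
  indexed by natural numbers.\<close>
definition F_coeff :: "nat \<Rightarrow> nat set \<Rightarrow> (nat \<Rightarrow> nat) \<Rightarrow> nat" where
  "F_coeff n D \<alpha> = card {s :: nat list. length s = n \<and>
      (\<forall>j \<in> {1..<n}. s ! (j - 1) \<le> s ! j \<and> (j \<in> D \<longrightarrow> s ! (j - 1) < s ! j)) \<and>
      (\<forall>k. card {j. j < n \<and> s ! j = k} = \<alpha> k)}"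

definition sumF_coeff :: "nat \<Rightarrow> (nat \<Rightarrow> nat) set \<Rightarrow> (nat \<Rightarrow> nat) \<Rightarrow> nat" where
  "sumF_coeff n S \<alpha> = (\<Sum>w\<in>S. F_coeff n (Des n w) \<alpha>)"

definition symmetric_set :: "nat \<Rightarrow> (nat \<Rightarrow> nat) set \<Rightarrow> bool" where
  "symmetric_set n S \<longleftrightarrow>
     (\<forall>\<sigma> :: nat \<Rightarrow> nat. \<forall>\<alpha>. bij \<sigma> \<longrightarrow> sumF_coeff n S (\<alpha> \<circ> \<sigma>) = sumF_coeff n S \<alpha>)"

end

theory Submission
  imports Defs
begin

(*
  For a content alpha there is at most one weakly increasing word s with that content, and
  the coefficient of x^alpha in F_{n,D} is 1 if D avoids the ties of s (the positions j with
  s_{j-1} = s_j) and 0 otherwise. Hence the coefficient of x^alpha in the sum over S counts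
  the w \<in> S whose descents avoid the ties, and S is symmetric as soon as this count is
  unchanged when the variables are permuted.

  If Des(pi_i) = {i-1, i}, the count is the number of i such that neither i-1 nor i is a
  tie, which is the number of letters occurring exactly once. For the complementary descent
  sets it is the number of i with all ties in {i-1, i}; this depends only on the number of
  ties, which is n minus the number of distinct letters, and, when there are two of them, on
  whether they are adjacent, i.e. whether some letter occurs at least three times. Both
  quantities are invariant under permuting the variables. For n \<ge> 3 the descent sets are
  pairwise distinct, so no two pi_i coincide; for n \<le> 2 all pi_i have the same descent
  set, either empty or [n-1], and the sum is a multiple of h_n or e_n.
*)

definition ties :: "nat list \<Rightarrow> nat set" where
  "ties s = {j. 1 \<le> j \<and> j < length s \<and> s ! (j - 1) = s ! j}"

definition sorted_with_content :: "nat \<Rightarrow> (nat \<Rightarrow> nat) \<Rightarrow> nat list set" where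
  "sorted_with_content n \<alpha> = {s. length s = n \<and> sorted s \<and> (\<forall>k. count_list s k = \<alpha> k)}"

lemma ties_subset: "ties s \<subseteq> {1..length s - 1}"
  by (auto simp: ties_def)

lemma card_nth_eq_count_list: "card {j. j < length s \<and> s ! j = k} = count_list s k"
  by (simp add: count_list_eq_length_filter length_filter_conv_card eq_commute)

lemma sorted_iff_nth_pred: "sorted s \<longleftrightarrow> (\<forall>j \<in> {1..<length s}. s ! (j - 1) \<le> s ! j)"
proof -
  have "(\<forall>j \<in> {1..<length s}. s ! (j - 1) \<le> s ! j) \<longleftrightarrow>
      (\<forall>i. Suc i < length s \<longrightarrow> s ! i \<le> s ! Suc i)"
    by (metis One_nat_def atLeastLessThan_iff diff_Suc_1 Suc_le_eq Suc_pred zero_less_Suc)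
  then show ?thesis by (simp add: sorted_iff_nth_Suc)
qed

lemma F_coeff_eq_card_ties:
  "F_coeff n D \<alpha> = card {s \<in> sorted_with_content n \<alpha>. D \<inter> ties s = {}}"
proof -
  have "(\<forall>j \<in> {1..<n}. s ! (j - 1) \<le> s ! j \<and> (j \<in> D \<longrightarrow> s ! (j - 1) < s ! j)) \<longleftrightarrow>
        sorted s \<and> D \<inter> ties s = {}" if "length s = n" for s :: "nat list"
  proof -
    have "D \<inter> ties s = {} \<longleftrightarrow> (\<forall>j \<in> {1..<n}. j \<in> D \<longrightarrow> s ! (j - 1) \<noteq> s ! j)"
      using that by (auto simp: ties_def)
    then show ?thesis
      using that by (auto simp: sorted_iff_nth_pred order_le_less)
  qed
  then show ?thesis
    unfolding F_coeff_def sorted_with_content_def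
    by (intro arg_cong[where f = card] Collect_cong) (auto simp: card_nth_eq_count_list)
qed

lemma sorted_with_content_unique:
  assumes "s \<in> sorted_with_content n \<alpha>" and "t \<in> sorted_with_content n \<alpha>"
  shows "s = t"
proof -
  have "mset s = mset t"
    using assms by (simp add: sorted_with_content_def multiset_eq_iff count_mset)
  then have "sort t = s"
    using assms by (intro properties_for_sort) (auto simp: sorted_with_content_def)
  then show ?thesis
    using assms by (simp add: sorted_with_content_def sorted_sort_id)
qed

lemma sort_map_inv_in_sorted_with_content:
  assumes "bij \<sigma>" and s: "s \<in> sorted_with_content n \<alpha>"
  shows "sort (map (inv \<sigma>) s) \<in> sorted_with_content n (\<alpha> \<circ> \<sigma>)"
proof -
  have "count_list (map (inv \<sigma>) s) k = \<alpha> (\<sigma> k)" for k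
    using count_list_map_conv[OF bij_is_inj[OF bij_imp_bij_inv[OF assms(1)]], of s "\<sigma> k"] s
    by (simp add: inv_f_f bij_is_inj[OF assms(1)] sorted_with_content_def)
  then show ?thesis
    using s by (simp add: sorted_with_content_def count_mset[symmetric])
qed

lemma sorted_with_content_empty_iff:
  assumes "bij \<sigma>"
  shows "sorted_with_content n (\<alpha> \<circ> \<sigma>) = {} \<longleftrightarrow> sorted_with_content n \<alpha> = {}"
proof
  assume "sorted_with_content n (\<alpha> \<circ> \<sigma>) = {}"
  then show "sorted_with_content n \<alpha> = {}"
    using sort_map_inv_in_sorted_with_content[OF assms] by blast
next
  assume empty: "sorted_with_content n \<alpha> = {}"
  have "\<alpha> \<circ> \<sigma> \<circ> inv \<sigma> = \<alpha>"
    using assms by (simp add: fun_eq_iff bij_is_surj surj_f_inv_f)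
  then show "sorted_with_content n (\<alpha> \<circ> \<sigma>) = {}"
    using sort_map_inv_in_sorted_with_content[OF bij_imp_bij_inv[OF assms], of _ n "\<alpha> \<circ> \<sigma>"] empty
    by fastforce
qed

lemma sumF_coeff_eq_card_ties:
  assumes "finite S" and s: "s \<in> sorted_with_content n \<alpha>"
  shows "sumF_coeff n S \<alpha> = card {w \<in> S. Des n w \<inter> ties s = {}}"
proof -
  have "sorted_with_content n \<alpha> = {s}"
    using s sorted_with_content_unique by blast
  then have "F_coeff n (Des n w) \<alpha> = (if Des n w \<inter> ties s = {} then 1 else 0)" for w
    by (simp add: F_coeff_eq_card_ties Collect_conj_eq)
  then show ?thesis
    using assms(1) by (simp add: sumF_coeff_def sum.If_cases Int_def)
qed

lemma sumF_coeff_eq_0: "sorted_with_content n \<alpha> = {} \<Longrightarrow> sumF_coeff n S \<alpha> = 0"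
  by (simp add: sumF_coeff_def F_coeff_eq_card_ties)

lemma symmetric_setI:
  assumes "finite S"
    and count: "\<And>\<alpha> s. s \<in> sorted_with_content n \<alpha> \<Longrightarrow>
      card {w \<in> S. Des n w \<inter> ties s = {}} = G \<alpha>"
    and invariant: "\<And>\<alpha> \<sigma>. bij \<sigma> \<Longrightarrow> G (\<alpha> \<circ> \<sigma>) = G \<alpha>"
  shows "symmetric_set n S"
  unfolding symmetric_set_def
proof (intro allI impI)
  fix \<sigma> \<alpha> :: "nat \<Rightarrow> nat"
  assume "bij \<sigma>"
  show "sumF_coeff n S (\<alpha> \<circ> \<sigma>) = sumF_coeff n S \<alpha>"
  proof (cases "sorted_with_content n \<alpha> = {}")
    case True
    then show ?thesis
      using sorted_with_content_empty_iff[OF \<open>bij \<sigma>\<close>] by (simp add: sumF_coeff_eq_0)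
  next
    case False
    then obtain s where s: "s \<in> sorted_with_content n \<alpha>" by blast
    have t: "sort (map (inv \<sigma>) s) \<in> sorted_with_content n (\<alpha> \<circ> \<sigma>)"
      using \<open>bij \<sigma>\<close> s by (rule sort_map_inv_in_sorted_with_content)
    show ?thesis
      using sumF_coeff_eq_card_ties[OF \<open>finite S\<close> s] sumF_coeff_eq_card_ties[OF \<open>finite S\<close> t]
        count[OF s] count[OF t] invariant[OF \<open>bij \<sigma>\<close>] by simp
  qed
qed

lemma ties_Cons_Cons: "ties (x # y # t) = Suc ` ties (y # t) \<union> (if x = y then {1} else {})"
proof -
  have "j \<in> ties (x # y # t) \<longleftrightarrow> j \<in> Suc ` ties (y # t) \<or> (j = 1 \<and> x = y)" for j
    by (cases j) (auto simp: ties_def image_iff nth_Cons' split: if_splits)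
  then show ?thesis by auto
qed

lemma card_ties_add_card_set: "sorted s \<Longrightarrow> card (ties s) + card (set s) = length s"
proof (induction s rule: induct_list012)
  case (3 x y t)
  have "x \<in> set (y # t) \<longleftrightarrow> x = y"
    using "3.prems" by (auto simp: antisym)
  moreover have "1 \<notin> Suc ` ties (y # t)" and "finite (ties (y # t))"
    using ties_subset[of "y # t"] by (auto intro: finite_subset)
  moreover have "card (ties (y # t)) + card (set (y # t)) = length (y # t)"
    using "3.IH"(2) "3.prems" by simp
  moreover have "set (x # y # t) = insert x (set (y # t))"
    by simp
  ultimately show ?case
    by (simp add: ties_Cons_Cons card_Un_disjoint card_image card_insert_if del: list.set)
qed (auto simp: ties_def)

lemma set_sorted_with_content:
  assumes "s \<in> sorted_with_content n \<alpha>"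
  shows "set s = {k. 0 < \<alpha> k}"
proof -
  have "k \<in> set s \<longleftrightarrow> count_list s k \<noteq> 0" for k
    by (metis count_list_0_iff)
  then show ?thesis
    using assms by (auto simp: sorted_with_content_def)
qed

lemma card_ties_sorted_with_content:
  "s \<in> sorted_with_content n \<alpha> \<Longrightarrow> card (ties s) = n - card {k. 0 < \<alpha> k}"
  using card_ties_add_card_set[of s] set_sorted_with_content[of s n \<alpha>]
  by (simp add: sorted_with_content_def)

lemma sorted_nth_eq_between:
  assumes "sorted s" and "i \<le> j" and "j \<le> k" and "k < length s" and "s ! i = s ! k"
  shows "s ! j = s ! i"
proof -
  have "s ! i \<le> s ! j" and "s ! j \<le> s ! k"
    using assms(1-4) by (simp_all add: sorted_nth_mono)
  then show ?thesis
    using assms(5) by simp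
qed

lemma ties_between:
  assumes "sorted s" and "i < j" and "j \<le> k" and "k < length s" and "s ! i = s ! k"
  shows "j \<in> ties s"
proof -
  have "s ! (j - 1) = s ! i" and "s ! j = s ! i"
    using sorted_nth_eq_between[OF assms(1), of i "j - 1" k]
      sorted_nth_eq_between[OF assms(1), of i j k] assms(2-5) by simp_all
  then show ?thesis
    using assms(2-4) by (simp add: ties_def)
qed

lemma singleton_block_iff_no_ties:
  assumes "sorted s" and "j < length s"
  shows "{j'. j' < length s \<and> s ! j' = s ! j} = {j} \<longleftrightarrow> {j, Suc j} \<inter> ties s = {}"
proof
  assume "{j'. j' < length s \<and> s ! j' = s ! j} = {j}"
  then have unique: "j' = j" if "j' < length s" "s ! j' = s ! j" for j'
    using that by blast
  have "j \<notin> ties s"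
  proof
    assume "j \<in> ties s"
    then have "1 \<le> j" and "s ! (j - 1) = s ! j"
      by (simp_all add: ties_def)
    moreover have "j - 1 < length s"
      using assms(2) by linarith
    ultimately show False
      using unique[of "j - 1"] by linarith
  qed
  moreover have "Suc j \<notin> ties s"
  proof
    assume "Suc j \<in> ties s"
    then have "Suc j < length s" and "s ! Suc j = s ! j"
      by (simp_all add: ties_def)
    then show False
      using unique[of "Suc j"] by simp
  qed
  ultimately show "{j, Suc j} \<inter> ties s = {}"
    by simp
next
  assume no_ties: "{j, Suc j} \<inter> ties s = {}"
  have "j' = j" if j': "j' < length s" "s ! j' = s ! j" for j'
  proof (rule ccontr)
    assume "j' \<noteq> j"
    then have "j \<in> ties s \<or> Suc j \<in> ties s"
      using ties_between[OF assms(1), of j' j j] ties_between[OF assms(1), of j "Suc j" j'] j' assms(2)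
      by (cases "j' < j") simp_all
    with no_ties show False
      by blast
  qed
  then show "{j'. j' < length s \<and> s ! j' = s ! j} = {j}"
    using assms(2) by blast
qed

lemma card_singleton_blocks:
  "card {j. j < length s \<and> {j'. j' < length s \<and> s ! j' = s ! j} = {j}} = card {k. count_list s k = 1}"
proof (rule bij_betw_same_card[of "\<lambda>j. s ! j"], rule bij_betwI')
  fix i j
  assume "i \<in> {j. j < length s \<and> {j'. j' < length s \<and> s ! j' = s ! j} = {j}}"
    and "j \<in> {j. j < length s \<and> {j'. j' < length s \<and> s ! j' = s ! j} = {j}}"
  then have "i < length s" and block: "{j'. j' < length s \<and> s ! j' = s ! j} = {j}"
    by simp_all
  then have "s ! i = s ! j \<Longrightarrow> i = j"
    by (metis (mono_tags, lifting) mem_Collect_eq singletonD)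
  then show "s ! i = s ! j \<longleftrightarrow> i = j"
    by blast
next
  fix j assume "j \<in> {j. j < length s \<and> {j'. j' < length s \<and> s ! j' = s ! j} = {j}}"
  then have "card {j'. j' < length s \<and> s ! j' = s ! j} = 1"
    by simp
  then show "s ! j \<in> {k. count_list s k = 1}"
    by (simp add: card_nth_eq_count_list)
next
  fix k assume "k \<in> {k. count_list s k = 1}"
  then have "card {j'. j' < length s \<and> s ! j' = k} = 1"
    by (simp add: card_nth_eq_count_list)
  then obtain j where block: "{j'. j' < length s \<and> s ! j' = k} = {j}"
    by (rule card_1_singletonE)
  then have "j \<in> {j'. j' < length s \<and> s ! j' = k}"
    by simp
  then have "j < length s" and "s ! j = k"
    by simp_all
  with block show "\<exists>j \<in> {j. j < length s \<and> {j'. j' < length s \<and> s ! j' = s ! j} = {j}}. k = s ! j"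
    by auto
qed

lemma card_positions_avoiding_ties:
  assumes "sorted s"
  shows "card {i \<in> {1..length s}. {i - 1, i} \<inter> ties s = {}} = card {k. count_list s k = 1}"
proof -
  have "{i \<in> {1..length s}. {i - 1, i} \<inter> ties s = {}} =
      Suc ` {j \<in> {..<length s}. {j, Suc j} \<inter> ties s = {}}"
    unfolding image_Suc_lessThan[symmetric] by auto
  then have "card {i \<in> {1..length s}. {i - 1, i} \<inter> ties s = {}} =
      card {j \<in> {..<length s}. {j, Suc j} \<inter> ties s = {}}"
    by (simp add: card_image)
  also have "\<dots> = card {j. j < length s \<and> {j'. j' < length s \<and> s ! j' = s ! j} = {j}}"
    using singleton_block_iff_no_ties[OF assms] by (intro arg_cong[where f = card]) auto
  also have "\<dots> = card {k. count_list s k = 1}"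
    by (rule card_singleton_blocks)
  finally show ?thesis .
qed

lemma adjacent_ties_iff:
  assumes "sorted s"
  shows "(\<exists>j. j \<in> ties s \<and> Suc j \<in> ties s) \<longleftrightarrow> (\<exists>k. 3 \<le> count_list s k)"
proof
  assume "\<exists>j. j \<in> ties s \<and> Suc j \<in> ties s"
  then obtain j where "j \<in> ties s" and "Suc j \<in> ties s"
    by blast
  then have "1 \<le> j" "Suc j < length s" "s ! (j - 1) = s ! j" "s ! j = s ! Suc j"
    by (simp_all add: ties_def)
  then have "{j - 1, j, Suc j} \<subseteq> {j'. j' < length s \<and> s ! j' = s ! j}"
    by auto
  then have "card {j - 1, j, Suc j} \<le> card {j'. j' < length s \<and> s ! j' = s ! j}"
    by (simp add: card_mono)
  moreover have "card {j - 1, j, Suc j} = 3"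
    using \<open>1 \<le> j\<close> by (cases j) simp_all
  ultimately have "3 \<le> card {j'. j' < length s \<and> s ! j' = s ! j}"
    by simp
  then show "\<exists>k. 3 \<le> count_list s k"
    by (auto simp: card_nth_eq_count_list)
next
  assume "\<exists>k. 3 \<le> count_list s k"
  then obtain k where "3 \<le> card {j. j < length s \<and> s ! j = k}"
    by (auto simp flip: card_nth_eq_count_list)
  moreover define X where "X = {j. j < length s \<and> s ! j = k}"
  ultimately have "3 \<le> card X" and "finite X"
    by simp_all
  then have "X \<noteq> {}"
    by auto
  have "X \<subseteq> {Min X..Max X}"
    using \<open>finite X\<close> by (simp add: subset_iff)
  then have "card X \<le> Suc (Max X) - Min X"
    using card_mono[of "{Min X..Max X}" X] by simp
  then have "Suc (Suc (Min X)) \<le> Max X"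
    using \<open>3 \<le> card X\<close> by linarith
  moreover have "Min X \<in> X" and "Max X \<in> X"
    using \<open>finite X\<close> \<open>X \<noteq> {}\<close> by simp_all
  ultimately have "Suc (Min X) \<in> ties s" and "Suc (Suc (Min X)) \<in> ties s"
    using ties_between[OF assms, of "Min X" _ "Max X"] by (simp_all add: X_def)
  then show "\<exists>j. j \<in> ties s \<and> Suc j \<in> ties s"
    by blast
qed

lemma subset_pair_eq_if_card_ge_2:
  assumes "E \<subseteq> {a, b}" and "2 \<le> card E"
  shows "E = {a, b}"
proof (rule card_seteq)
  show "card {a, b} \<le> card E"
    using assms(2) by (simp add: card_insert_if)
qed (use assms(1) in simp_all)

definition covering_pairs_count :: "nat \<Rightarrow> nat \<Rightarrow> bool \<Rightarrow> nat" where
  "covering_pairs_count n c adjacent =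
    (if c = 0 then n else if c = 1 then 2 else if c = 2 \<and> adjacent then 1 else 0)"

lemma card_covering_pairs:
  fixes E :: "nat set"
  assumes "E \<subseteq> {1..n - 1}"
  shows "card {i \<in> {1..n}. E \<subseteq> {i - 1, i}} =
    covering_pairs_count n (card E) (\<exists>j. j \<in> E \<and> Suc j \<in> E)"
proof -
  have "finite E"
    using assms finite_subset by blast
  consider "card E = 0" | "card E = 1" | (adjacent) "card E = 2" "\<exists>j. j \<in> E \<and> Suc j \<in> E"
    | (other) "2 \<le> card E" "\<not> (card E = 2 \<and> (\<exists>j. j \<in> E \<and> Suc j \<in> E))"
    by (metis One_nat_def less_2_cases not_less)
  then show ?thesis
  proof cases
    case 1
    then have "E = {}"
      using \<open>finite E\<close> by simp
    then have "{i \<in> {1..n}. E \<subseteq> {i - 1, i}} = {1..n}"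
      by auto
    then show ?thesis
      using 1 by (simp add: covering_pairs_count_def)
  next
    case 2
    then obtain j where "E = {j}"
      by (rule card_1_singletonE)
    moreover have "1 \<le> j" "j < n"
      using assms \<open>E = {j}\<close> by auto
    ultimately have "{i \<in> {1..n}. E \<subseteq> {i - 1, i}} = {j, Suc j}"
      by auto
    then show ?thesis
      using 2 by (simp add: covering_pairs_count_def)
  next
    case adjacent
    then obtain j where pair: "{j, Suc j} \<subseteq> E"
      by blast
    have "card {j, Suc j} = card E"
      using adjacent(1) by simp
    then have "E = {j, Suc j}"
      using card_subset_eq[OF \<open>finite E\<close> pair] by simp
    moreover have "Suc j \<le> n"
      using assms \<open>E = {j, Suc j}\<close> by auto
    ultimately have "{i \<in> {1..n}. E \<subseteq> {i - 1, i}} = {Suc j}"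
      by auto
    then show ?thesis
      using adjacent by (simp add: covering_pairs_count_def)
  next
    case other
    have "\<not> E \<subseteq> {i - 1, i}" for i
    proof
      assume "E \<subseteq> {i - 1, i}"
      then have "E = {i - 1, i}"
        using other(1) by (rule subset_pair_eq_if_card_ge_2)
      then have "i - 1 \<in> E" and "Suc (i - 1) \<in> E" and "card E = 2"
        using assms other(1) by (auto simp: card_insert_if)
      with other(2) show False
        by blast
    qed
    then show ?thesis
      using other by (auto simp: covering_pairs_count_def)
  qed
qed

lemma card_Collect_comp_bij: "bij \<sigma> \<Longrightarrow> card {k. P (\<alpha> (\<sigma> k))} = card {k. P (\<alpha> k)}"
proof -
  assume "bij \<sigma>"
  have "{k. P (\<alpha> (\<sigma> k))} = \<sigma> -` {k. P (\<alpha> k)}"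
    by auto
  also have "card \<dots> = card {k. P (\<alpha> k)}"
    using \<open>bij \<sigma>\<close> by (intro card_vimage_inj) (auto simp: bij_is_inj bij_is_surj)
  finally show ?thesis .
qed

lemma ex_comp_bij: "bij \<sigma> \<Longrightarrow> (\<exists>k. P (\<alpha> (\<sigma> k))) \<longleftrightarrow> (\<exists>k. P (\<alpha> k))"
  by (metis bij_pointE)

lemma symmetric_set_image:
  assumes "finite I" and inj: "inj_on D I"
    and Des_eq: "\<And>i. i \<in> I \<Longrightarrow> Des n (\<pi> i) = D i"
    and count: "\<And>\<alpha> s. s \<in> sorted_with_content n \<alpha> \<Longrightarrow>
      card {i \<in> I. D i \<inter> ties s = {}} = G \<alpha>"
    and invariant: "\<And>\<alpha> \<sigma>. bij \<sigma> \<Longrightarrow> G (\<alpha> \<circ> \<sigma>) = G \<alpha>"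
  shows "symmetric_set n (\<pi> ` I)"
proof (rule symmetric_setI[where G = G])
  have "inj_on \<pi> I"
    using inj Des_eq by (metis inj_on_def)
  fix \<alpha> s
  assume s: "s \<in> sorted_with_content n \<alpha>"
  have "{w \<in> \<pi> ` I. Des n w \<inter> ties s = {}} = \<pi> ` {i \<in> I. D i \<inter> ties s = {}}"
    using Des_eq by auto
  then have "card {w \<in> \<pi> ` I. Des n w \<inter> ties s = {}} = card {i \<in> I. D i \<inter> ties s = {}}"
    using inj_on_subset[OF \<open>inj_on \<pi> I\<close>] by (simp add: card_image)
  then show "card {w \<in> \<pi> ` I. Des n w \<inter> ties s = {}} = G \<alpha>"
    using count[OF s] by simp
qed (use \<open>finite I\<close> invariant in simp_all)

lemma inj_on_adjacent_pairs:
  fixes n :: nat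
  assumes "3 \<le> n"
  shows "inj_on (\<lambda>i. {i - 1, i} \<inter> {1..n - 1}) {1..n}"
proof -
  have False if i: "i \<in> {1..n}" and j: "j \<in> {1..n}" and "i < j"
    and eq: "{i - 1, i} \<inter> {1..n - 1} = {j - 1, j} \<inter> {1..n - 1}" for i j
  proof -
    have "i \<le> n - 1"
      using j \<open>i < j\<close> by simp
    then have "i \<in> {i - 1, i} \<inter> {1..n - 1}"
      using i by simp
    then have "i \<in> {j - 1, j}"
      using eq by blast
    then have "j = Suc i"
      using \<open>i < j\<close> by auto
    show False
    proof (cases "i = 1")
      case True
      then have "2 \<in> {j - 1, j} \<inter> {1..n - 1}"
        using \<open>j = Suc i\<close> assms by simp
      then have "2 \<in> {i - 1, i}"
        using eq by blast
      then show False
        using True by simp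
    next
      case False
      then have "i - 1 \<in> {i - 1, i} \<inter> {1..n - 1}"
        using i \<open>i \<le> n - 1\<close> by auto
      then have "i - 1 \<in> {j - 1, j}"
        using eq by blast
      then have "i - 1 \<in> {i, Suc i}"
        using \<open>j = Suc i\<close> by simp
      then show False
        using i by auto
    qed
  qed
  then show ?thesis
    by (intro inj_onI) (metis linorder_neqE_nat)
qed

lemma symmetric_set_Des_adjacent_pair:
  assumes "3 \<le> n" and Des_eq: "\<forall>i \<in> {1..n}. Des n (\<pi> i) = {i - 1, i} \<inter> {1..n - 1}"
  shows "symmetric_set n (\<pi> ` {1..n})"
proof (rule symmetric_set_image[where G = "\<lambda>\<alpha>. card {k. \<alpha> k = 1}"])
  show "inj_on (\<lambda>i. {i - 1, i} \<inter> {1..n - 1}) {1..n}"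
    using assms(1) by (rule inj_on_adjacent_pairs)
next
  fix \<alpha> s
  assume s: "s \<in> sorted_with_content n \<alpha>"
  then have "length s = n" and "sorted s"
    by (simp_all add: sorted_with_content_def)
  have "ties s \<subseteq> {1..n - 1}"
    using ties_subset[of s] \<open>length s = n\<close> by simp
  then have "{i \<in> {1..n}. {i - 1, i} \<inter> {1..n - 1} \<inter> ties s = {}} =
      {i \<in> {1..length s}. {i - 1, i} \<inter> ties s = {}}"
    using \<open>length s = n\<close> by blast
  then show "card {i \<in> {1..n}. {i - 1, i} \<inter> {1..n - 1} \<inter> ties s = {}} = card {k. \<alpha> k = 1}"
    using card_positions_avoiding_ties[OF \<open>sorted s\<close>] s by (simp add: sorted_with_content_def)
next
  fix \<alpha> \<sigma> :: "nat \<Rightarrow> nat"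
  assume "bij \<sigma>"
  then show "card {k. (\<alpha> \<circ> \<sigma>) k = 1} = card {k. \<alpha> k = 1}"
    using card_Collect_comp_bij[of \<sigma> "\<lambda>x. x = 1" \<alpha>] by simp
qed (use Des_eq in simp_all)

lemma symmetric_set_Des_complement_adjacent_pair:
  assumes "3 \<le> n" and Des_eq: "\<forall>i \<in> {1..n}. Des n (\<pi> i) = {1..n - 1} - {i - 1, i}"
  shows "symmetric_set n (\<pi> ` {1..n})"
proof (rule symmetric_set_image[where
      G = "\<lambda>\<alpha>. covering_pairs_count n (n - card {k. 0 < \<alpha> k}) (\<exists>k. 3 \<le> \<alpha> k)"])
  show "inj_on (\<lambda>i. {1..n - 1} - {i - 1, i}) {1..n}"
  proof (rule inj_onI)
    fix i j
    assume "i \<in> {1..n}" "j \<in> {1..n}" and "{1..n - 1} - {i - 1, i} = {1..n - 1} - {j - 1, j}"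
    moreover from this have "{i - 1, i} \<inter> {1..n - 1} = {j - 1, j} \<inter> {1..n - 1}"
      by blast
    ultimately show "i = j"
      using inj_on_adjacent_pairs[OF assms(1)] by (meson inj_onD)
  qed
next
  fix \<alpha> s
  assume s: "s \<in> sorted_with_content n \<alpha>"
  then have "length s = n" and "sorted s"
    by (simp_all add: sorted_with_content_def)
  have "ties s \<subseteq> {1..n - 1}"
    using ties_subset[of s] \<open>length s = n\<close> by simp
  then have "{i \<in> {1..n}. ({1..n - 1} - {i - 1, i}) \<inter> ties s = {}} =
      {i \<in> {1..n}. ties s \<subseteq> {i - 1, i}}"
    by blast
  also have "card \<dots> =
      covering_pairs_count n (card (ties s)) (\<exists>j. j \<in> ties s \<and> Suc j \<in> ties s)"
    using \<open>ties s \<subseteq> {1..n - 1}\<close> by (rule card_covering_pairs)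
  also have "\<dots> = covering_pairs_count n (n - card {k. 0 < \<alpha> k}) (\<exists>k. 3 \<le> \<alpha> k)"
    using card_ties_sorted_with_content[OF s] adjacent_ties_iff[OF \<open>sorted s\<close>] s
    by (simp add: sorted_with_content_def)
  finally show "card {i \<in> {1..n}. ({1..n - 1} - {i - 1, i}) \<inter> ties s = {}} =
      covering_pairs_count n (n - card {k. 0 < \<alpha> k}) (\<exists>k. 3 \<le> \<alpha> k)" .
next
  fix \<alpha> \<sigma> :: "nat \<Rightarrow> nat"
  assume "bij \<sigma>"
  then show "covering_pairs_count n (n - card {k. 0 < (\<alpha> \<circ> \<sigma>) k}) (\<exists>k. 3 \<le> (\<alpha> \<circ> \<sigma>) k) =
      covering_pairs_count n (n - card {k. 0 < \<alpha> k}) (\<exists>k. 3 \<le> \<alpha> k)"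
    using card_Collect_comp_bij[of \<sigma> "\<lambda>x. 0 < x" \<alpha>] ex_comp_bij[of \<sigma> "\<lambda>x. 3 \<le> x" \<alpha>]
    by simp
qed (use Des_eq in simp_all)

lemma symmetric_set_Des_const:
  assumes "finite S" and Des_eq: "\<forall>w \<in> S. Des n w = D" and D: "D = {} \<or> D = {1..n - 1}"
  shows "symmetric_set n S"
proof (rule symmetric_setI[where G = "\<lambda>\<alpha>. if D = {} \<or> card {k. 0 < \<alpha> k} = n then card S else 0"])
  fix \<alpha> s
  assume s: "s \<in> sorted_with_content n \<alpha>"
  then have "card (ties s) + card {k. 0 < \<alpha> k} = n"
    using card_ties_add_card_set[of s] set_sorted_with_content[OF s]
    by (simp add: sorted_with_content_def)
  moreover have "finite (ties s)"
    using ties_subset finite_subset by blast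
  moreover have "D \<inter> ties s = {} \<longleftrightarrow> D = {} \<or> ties s = {}"
    using D ties_subset[of s] s by (auto simp: sorted_with_content_def)
  ultimately have "D \<inter> ties s = {} \<longleftrightarrow> D = {} \<or> card {k. 0 < \<alpha> k} = n"
    by auto
  moreover have "{w \<in> S. Des n w \<inter> ties s = {}} = (if D \<inter> ties s = {} then S else {})"
    using Des_eq by auto
  ultimately show "card {w \<in> S. Des n w \<inter> ties s = {}} =
      (if D = {} \<or> card {k. 0 < \<alpha> k} = n then card S else 0)"
    by simp
next
  fix \<alpha> \<sigma> :: "nat \<Rightarrow> nat"
  assume "bij \<sigma>"
  then show "(if D = {} \<or> card {k. 0 < (\<alpha> \<circ> \<sigma>) k} = n then card S else 0) =
      (if D = {} \<or> card {k. 0 < \<alpha> k} = n then card S else 0)"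
    using card_Collect_comp_bij[of \<sigma> "\<lambda>x. 0 < x" \<alpha>] by simp
qed (rule \<open>finite S\<close>)

lemma Des_const_if_le_2:
  fixes n :: nat
  assumes "n \<le> 2"
    and des: "(\<forall>i \<in> {1..n}. Des n (\<pi> i) = {i - 1, i} \<inter> {1..n - 1}) \<or>
              (\<forall>i \<in> {1..n}. Des n (\<pi> i) = {1..n - 1} - {i - 1, i})"
  obtains D where "D = {} \<or> D = {1..n - 1}" and "\<forall>i \<in> {1..n}. Des n (\<pi> i) = D"
proof -
  have "{1..n - 1} \<subseteq> {i - 1, i}" if "i \<in> {1..n}" for i
    using assms(1) that by auto
  then have adjacent_eq: "{i - 1, i} \<inter> {1..n - 1} = {1..n - 1}"
    and complement_eq: "{1..n - 1} - {i - 1, i} = {}" if "i \<in> {1..n}" for i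
    using that by blast+
  from des show thesis
  proof
    assume "\<forall>i \<in> {1..n}. Des n (\<pi> i) = {i - 1, i} \<inter> {1..n - 1}"
    with adjacent_eq have "\<forall>i \<in> {1..n}. Des n (\<pi> i) = {1..n - 1}"
      by simp
    then show thesis
      using that by blast
  next
    assume "\<forall>i \<in> {1..n}. Des n (\<pi> i) = {1..n - 1} - {i - 1, i}"
    with complement_eq have "\<forall>i \<in> {1..n}. Des n (\<pi> i) = {}"
      by (simp del: Diff_eq_empty_iff)
    then show thesis
      using that by blast
  qed
qed

theorem proposition4p15:
  fixes n :: nat and \<pi> :: "nat \<Rightarrow> nat \<Rightarrow> nat"
  assumes perm: "\<forall>i \<in> {1..n}. \<pi> i permutes {1..n}"
    and des: "(\<forall>i \<in> {1..n}. Des n (\<pi> i) = {i - 1, i} \<inter> {1..n-1}) \<or>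
              (\<forall>i \<in> {1..n}. Des n (\<pi> i) = {1..n-1} - {i - 1, i})"
  shows "symmetric_set n (\<pi> ` {1..n})"
proof (cases "3 \<le> n")
  \<comment> \<open>Only the descent sets matter.\<close>
  case True
  with des show ?thesis
    using symmetric_set_Des_adjacent_pair symmetric_set_Des_complement_adjacent_pair by blast
next
  case False
  then have "n \<le> 2"
    by simp
  then obtain D where "D = {} \<or> D = {1..n - 1}" and "\<forall>i \<in> {1..n}. Des n (\<pi> i) = D"
    using des by (rule Des_const_if_le_2)
  then show ?thesis
    by (intro symmetric_set_Des_const) auto
qed

end
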